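(* For every $k\ge 0$, as formal power series in $x$, $$\sum_{n} L(n,k)x^n=\sum_{n}L(n,n-k)x^n=\frac{x^k e_k(x)}{(1-x)^{k+1}(1+x)^k}.$$
   Context: $e(n,j)$ is the number of $j$-element subsets of $\{1,\dots,n\}$ with even sum (the empty set counts as even), and $e_k(x)=\sum_{j=0}^k e(k,j)x^j$. Losanitsch's triangle $(L(n,k))_{n,k\ge 0}$ is defined by $L(0,k)=[k=0]$, $L(1,k)=[k\le 1]$ for $k\ge0$, $L(n,k)=0$ for $k<0$, and for $n\ge 2$ and all $k$: $L(n,k)=L(n-2,k)+\binom{n-2}{k-1}+L(n-2,k-2)$, where $\binom{m}{j}=0$ for $j<0$ or $j>m$. The sums are over $n\ge 0$ (terms with $n-k<0$ or $n<k$ vanish). *)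

theory Defs
  imports Main "HOL-Computational_Algebra.Formal_Power_Series"
begin

definition e_cnt :: "nat \<Rightarrow> nat \<Rightarrow> nat" where
  "e_cnt n j = card {S. S \<subseteq> {1..n} \<and> card S = j \<and> even (\<Sum>S)}"

definition e_poly :: "nat \<Rightarrow> rat fps" where
  "e_poly k = (\<Sum>j=0..k. of_nat (e_cnt k j) * fps_X ^ j)"

definition binom_int :: "nat \<Rightarrow> int \<Rightarrow> nat" where
  "binom_int m j = (if j < 0 \<or> j > int m then 0 else m choose nat j)"

fun Los :: "nat \<Rightarrow> int \<Rightarrow> nat" where
  "Los 0 k = (if k = 0 then 1 else 0)"
| "Los (Suc 0) k = (if 0 \<le> k \<and> k \<le> 1 then 1 else 0)"
| "Los (Suc (Suc m)) k = Los m k + binom_int m (k - 1) + Los m (k - 2)"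

end

theory Submission
  imports Defs
begin

(* Read off coefficientwise, the recurrence for L(n,k) says that the column generating
   function A_k = sum_n L(n,k) x^n satisfies
     (1 - x^2) A_{k+2} = x^2 (x^{k+1} / (1 - x)^{k+2} + A_k),
   with A_0 and A_1 given explicitly.  On the other side, the generating function of the
   subsets of {1..k} by sum and size factors as sum_S t^(sum S) x^|S| = prod_i (1 + t^i x);
   averaging t = 1 and t = -1 keeps the subsets of even sum, so
   2 e_k = (1 + x)^k + prod_i (1 + (-1)^i x), whence e_{k+2} = x (1 + x)^{k+1} + (1 - x^2) e_k.
   Thus both sides of the closed form satisfy the same two-step recurrence.  The symmetry
   L(n,k) = L(n,n-k) is inherited from that of the binomial coefficients. *)

lemma binom_int_of_nat [simp]: "binom_int m (int j) = m choose j"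
  by (simp add: binom_int_def)

lemma binom_int_symmetric: "binom_int m (int m - j) = binom_int m j"
proof (cases "0 \<le> j \<and> j \<le> int m")
  case True
  then obtain i where j: "j = int i"
    by (metis nonneg_int_cases)
  with True have "i \<le> m" by simp
  with j have "int m - j = int (m - i)" by simp
  with j \<open>i \<le> m\<close> show ?thesis by (simp only: binom_int_of_nat binomial_symmetric[of i m])
next
  case False
  then show ?thesis by (auto simp: binom_int_def)
qed

lemma Los_negative: "k < 0 \<Longrightarrow> Los n k = 0"
  by (induction n k rule: Los.induct) (auto simp: binom_int_def)

lemma Los_symmetric: "Los n (int n - j) = Los n j"
proof (induction n j rule: Los.induct)
  case (3 m k)
  have "int (Suc (Suc m)) - k - 1 = int m - (k - 1)" by simp
  then have "binom_int m (int (Suc (Suc m)) - k - 1) = binom_int m (k - 1)"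
    by (simp only: binom_int_symmetric)
  with 3 show ?case by (simp add: algebra_simps)
qed auto

definition choose_fps :: "nat \<Rightarrow> 'a::comm_ring_1 fps" where
  "choose_fps j = Abs_fps (\<lambda>n. of_nat (n choose j))"

lemma choose_fps_0_mult_one_minus_X: "choose_fps 0 * (1 - fps_X) = 1"
proof (rule fps_ext)
  fix n show "fps_nth (choose_fps 0 * (1 - fps_X)) n = fps_nth (1::'a fps) n"
    by (cases n) (simp_all add: choose_fps_def algebra_simps fps_X_mult_nth mult.commute[of _ fps_X])
qed

lemma choose_fps_Suc_mult_one_minus_X: "choose_fps (Suc j) * (1 - fps_X) = fps_X * choose_fps j"
proof (rule fps_ext)
  fix n show "fps_nth (choose_fps (Suc j) * (1 - fps_X)) n = fps_nth (fps_X * choose_fps j :: 'a fps) n"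
    by (cases n) (simp_all add: choose_fps_def algebra_simps fps_X_mult_nth mult.commute[of _ fps_X])
qed

lemma choose_fps_mult_one_minus_X_power: "choose_fps j * (1 - fps_X) ^ Suc j = fps_X ^ j"
proof (induction j)
  case 0
  then show ?case by (simp add: choose_fps_0_mult_one_minus_X)
next
  case (Suc j)
  have "(choose_fps (Suc j) :: 'a fps) * (1 - fps_X) ^ Suc (Suc j)
      = (choose_fps (Suc j) * (1 - fps_X)) * (1 - fps_X) ^ Suc j"
    by (simp add: algebra_simps)
  also have "\<dots> = fps_X * (choose_fps j * (1 - fps_X) ^ Suc j)"
    by (simp only: choose_fps_Suc_mult_one_minus_X mult.assoc)
  also have "\<dots> = fps_X * fps_X ^ j"
    by (simp only: Suc.IH)
  finally show ?case by simp
qed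

definition Los_fps :: "nat \<Rightarrow> 'a::comm_ring_1 fps" where
  "Los_fps k = Abs_fps (\<lambda>n. of_nat (Los n (int k)))"

lemma fps_nth_one_minus_X2_mult:
  fixes f :: "'a::comm_ring_1 fps"
  shows "fps_nth ((1 - fps_X ^ 2) * f) n
    = fps_nth f n - (if n < 2 then 0 else fps_nth f (n - 2))"
  by (simp add: left_diff_distrib fps_X_power_mult_nth)

lemma Los_fps_rec_0: "(1 - fps_X ^ 2) * Los_fps 0 = 1 + fps_X"
proof (rule fps_ext)
  fix n show "fps_nth ((1 - fps_X ^ 2) * Los_fps 0) n = fps_nth (1 + fps_X :: 'a fps) n"
    by (cases n; cases "n - 1")
      (simp_all add: fps_nth_one_minus_X2_mult Los_fps_def Los_negative binom_int_def)
qed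

lemma Los_fps_rec_1: "(1 - fps_X ^ 2) * Los_fps 1 = fps_X + fps_X ^ 2 * choose_fps 0"
proof (rule fps_ext)
  fix n show "fps_nth ((1 - fps_X ^ 2) * Los_fps 1) n = fps_nth (fps_X + fps_X ^ 2 * choose_fps 0 :: 'a fps) n"
    by (cases n; cases "n - 1")
      (simp_all add: fps_nth_one_minus_X2_mult fps_X_power_mult_nth Los_fps_def choose_fps_def Los_negative binom_int_def)
qed

lemma Los_fps_rec_Suc_Suc:
  "(1 - fps_X ^ 2) * Los_fps (k + 2) = fps_X ^ 2 * (choose_fps (k + 1) + Los_fps k)"
proof (rule fps_ext)
  fix n show "fps_nth ((1 - fps_X ^ 2) * Los_fps (k + 2)) n
      = fps_nth (fps_X ^ 2 * (choose_fps (k + 1) + Los_fps k) :: 'a fps) n"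
    by (cases n; cases "n - 1")
      (auto simp add: fps_nth_one_minus_X2_mult fps_X_power_mult_nth Los_fps_def choose_fps_def
        binom_int_def binomial_eq_0 nat_add_distrib)
qed

lemma sum_Pow_power_sum_card_eq_prod:
  fixes t x :: "'a::comm_semiring_1"
  assumes "finite A"
  shows "(\<Sum>S\<in>Pow A. t ^ (\<Sum>S) * x ^ card S) = (\<Prod>i\<in>A. 1 + t ^ i * x)"
proof -
  have "(\<Prod>i\<in>A. t ^ i * x + 1) = (\<Sum>S\<in>Pow A. (\<Prod>i\<in>S. t ^ i * x) * (\<Prod>i\<in>A - S. 1))"
    by (rule prod_add[OF assms])
  also have "\<dots> = (\<Sum>S\<in>Pow A. t ^ (\<Sum>S) * x ^ card S)"
    by (intro sum.cong) (simp_all add: prod.distrib power_sum)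
  finally show ?thesis by (simp add: add.commute)
qed

lemma e_poly_eq_sum_even_subsets:
  "e_poly k = (\<Sum>S\<in>Pow {1..k}. if even (\<Sum>S) then fps_X ^ card S else 0)"
proof -
  define E where "E = {S\<in>Pow {1..k}. even (\<Sum>S)}"
  have "finite E" unfolding E_def by simp
  have card_E: "card ` E \<subseteq> {0..k}"
    unfolding E_def using card_mono[of "{1..k}"] by fastforce
  have "e_poly k = (\<Sum>j=0..k. \<Sum>S\<in>{S\<in>E. card S = j}. fps_X ^ card S)"
    unfolding e_poly_def
  proof (rule sum.cong[OF refl])
    fix j
    have "{S\<in>E. card S = j} = {S. S \<subseteq> {1..k} \<and> card S = j \<and> even (\<Sum>S)}"
      unfolding E_def by auto
    then show "of_nat (e_cnt k j) * fps_X ^ j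
        = (\<Sum>S\<in>{S\<in>E. card S = j}. (fps_X ^ card S :: rat fps))"
      by (simp add: e_cnt_def)
  qed
  also have "\<dots> = (\<Sum>S\<in>E. fps_X ^ card S)"
    by (rule sum.group[OF \<open>finite E\<close> _ card_E]) simp
  also have "\<dots> = (\<Sum>S\<in>Pow {1..k}. if even (\<Sum>S) then fps_X ^ card S else 0)"
    unfolding E_def by (rule sum.inter_filter) simp
  finally show ?thesis .
qed

lemma two_e_poly:
  "2 * e_poly k = (1 + fps_X) ^ k + (\<Prod>i=1..k. 1 + (-1) ^ i * fps_X)"
proof -
  have "2 * e_poly k = (\<Sum>S\<in>Pow {1..k}. 1 ^ (\<Sum>S) * fps_X ^ card S + (-1) ^ (\<Sum>S) * fps_X ^ card S)"
    unfolding e_poly_eq_sum_even_subsets sum_distrib_left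
    by (rule sum.cong[OF refl]) (auto simp: neg_one_even_power neg_one_odd_power)
  also have "\<dots> = (\<Prod>i=1..k. 1 + 1 ^ i * fps_X) + (\<Prod>i=1..k. 1 + (-1) ^ i * fps_X)"
    by (simp only: sum.distrib sum_Pow_power_sum_card_eq_prod finite_atLeastAtMost)
  finally show ?thesis by simp
qed

lemma e_poly_0: "e_poly 0 = 1"
  using two_e_poly[of 0] by simp

lemma e_poly_1: "e_poly 1 = 1"
  using two_e_poly[of 1] by simp

lemma e_poly_Suc_Suc:
  "e_poly (k + 2) = fps_X * (1 + fps_X) ^ (k + 1) + (1 - fps_X ^ 2) * e_poly k"
proof -
  define P where "P k = (\<Prod>i=1..k. 1 + (-1) ^ i * fps_X :: rat fps)" for k
  have P_Suc_Suc: "P (k + 2) = (1 - fps_X ^ 2) * P k"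
    by (cases "even k") (simp_all add: P_def algebra_simps power2_eq_square)
  have two_e_poly_P: "2 * e_poly j = (1 + fps_X) ^ j + P j" for j
    by (simp add: P_def two_e_poly)
  have "2 * e_poly (k + 2) = (1 + fps_X) ^ (k + 2) + (1 - fps_X ^ 2) * P k"
    by (simp only: two_e_poly_P P_Suc_Suc)
  also have "\<dots> = 2 * (fps_X * (1 + fps_X) ^ (k + 1)) + (1 - fps_X ^ 2) * ((1 + fps_X) ^ k + P k)"
    by (simp add: algebra_simps power2_eq_square)
  also have "\<dots> = 2 * (fps_X * (1 + fps_X) ^ (k + 1) + (1 - fps_X ^ 2) * e_poly k)"
    by (simp only: two_e_poly_P distrib_left mult.left_commute[of 2])
  finally show ?thesis
    by (simp only: mult_cancel_left numeral_neq_fps_zero simp_thms)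
qed

lemma one_minus_X2_nonzero: "(1 - fps_X ^ 2 :: 'a::comm_ring_1 fps) \<noteq> 0"
proof
  assume "(1 - fps_X ^ 2 :: 'a fps) = 0"
  then have "fps_nth (1 - fps_X ^ 2 :: 'a fps) 0 = 0" by simp
  then show False by simp
qed

lemma Los_fps_mult_denominator:
  "(Los_fps k :: rat fps) * ((1 - fps_X) ^ (k + 1) * (1 + fps_X) ^ k) = fps_X ^ k * e_poly k"
  (is "?A k * ?D k = ?N k")
proof (induction k rule: nat_induct2)
  case 0
  have "(1 - fps_X ^ 2) * (?A 0 * ?D 0) = ((1 - fps_X ^ 2) * Los_fps 0) * (1 - fps_X)"
    by (simp add: algebra_simps)
  also have "\<dots> = (1 - fps_X ^ 2) * ?N 0"
    by (simp only: Los_fps_rec_0 e_poly_0) (simp add: algebra_simps power2_eq_square)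
  finally show ?case
    by (simp only: mult_left_cancel[OF one_minus_X2_nonzero])
next
  case 1
  have "(1 - fps_X ^ 2) * (?A 1 * ?D 1)
      = ((1 - fps_X ^ 2) * Los_fps 1) * ((1 - fps_X) ^ 2 * (1 + fps_X))"
    by (simp add: mult_ac power2_eq_square)
  also have "\<dots> = fps_X * (1 - fps_X) ^ 2 * (1 + fps_X)
      + fps_X ^ 2 * (1 - fps_X) * (1 + fps_X) * (choose_fps 0 * (1 - fps_X))"
    by (simp only: Los_fps_rec_1) (simp add: algebra_simps power2_eq_square)
  also have "\<dots> = (1 - fps_X ^ 2) * ?N 1"
    by (simp only: choose_fps_0_mult_one_minus_X e_poly_1) (simp add: algebra_simps power2_eq_square)
  finally show ?case
    by (simp only: mult_left_cancel[OF one_minus_X2_nonzero])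
next
  case (step m)
  let ?c = "1 - fps_X ^ 2 :: rat fps"
  have A_D: "?A m * ?D (m + 2) = ?N m * ?c ^ 2"
  proof -
    have "?A m * ?D (m + 2) = (?A m * ?D m) * ?c ^ 2"
      by (simp add: algebra_simps power2_eq_square)
    then show ?thesis by (simp only: step)
  qed
  have choose_D:
    "choose_fps (m + 1) * ?D (m + 2) = fps_X ^ (m + 1) * ((1 - fps_X) * (1 + fps_X) ^ (m + 2))"
  proof -
    have "choose_fps (m + 1) * ?D (m + 2)
        = (choose_fps (m + 1) * (1 - fps_X) ^ Suc (m + 1)) * ((1 - fps_X) * (1 + fps_X) ^ (m + 2))"
      by (simp add: algebra_simps)
    then show ?thesis by (simp only: choose_fps_mult_one_minus_X_power)
  qed
  have "?c * (?A (m + 2) * ?D (m + 2))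
      = fps_X ^ 2 * (choose_fps (m + 1) * ?D (m + 2)) + fps_X ^ 2 * (?A m * ?D (m + 2))"
    by (simp only: mult.assoc[symmetric] Los_fps_rec_Suc_Suc) (simp add: algebra_simps)
  also have "\<dots> = fps_X ^ 2 * (fps_X ^ (m + 1) * ((1 - fps_X) * (1 + fps_X) ^ (m + 2)))
      + fps_X ^ 2 * (?N m * ?c ^ 2)"
    by (simp only: choose_D A_D)
  also have "\<dots> = ?c * ?N (m + 2)"
    by (simp only: e_poly_Suc_Suc) (simp add: algebra_simps power2_eq_square)
  finally show ?case
    by (simp only: mult_left_cancel[OF one_minus_X2_nonzero])
qed

theorem proposition3p3:
  fixes k :: nat
  shows "Abs_fps (\<lambda>n. of_nat (Los n (int k)) :: rat) = Abs_fps (\<lambda>n. of_nat (Los n (int n - int k)))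
       \<and> Abs_fps (\<lambda>n. of_nat (Los n (int n - int k)) :: rat)
           = fps_X ^ k * e_poly k / ((1 - fps_X) ^ (k + 1) * (1 + fps_X) ^ k)"
proof -
  have symmetric: "Abs_fps (\<lambda>n. of_nat (Los n (int n - int k)) :: rat) = Los_fps k"
    by (simp add: Los_fps_def Los_symmetric)
  have "fps_nth ((1 - fps_X) ^ (k + 1) * (1 + fps_X) ^ k :: rat fps) 0 = 1"
    by (simp add: fps_mult_nth_0 fps_nth_power_0)
  then have "((1 - fps_X) ^ (k + 1) * (1 + fps_X) ^ k :: rat fps) \<noteq> 0"
    by (metis fps_zero_nth zero_neq_one)
  then have "fps_X ^ k * e_poly k / ((1 - fps_X) ^ (k + 1) * (1 + fps_X) ^ k) = Los_fps k"
    by (simp flip: Los_fps_mult_denominator)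
  with symmetric show ?thesis
    by (simp add: Los_fps_def)
qed

end
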